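(* Let $T,B,X$ be the unique formal power series in $t$ with $T=1+tT^3$, $B=tT^2$, $X=B(1+X+X^2)$, and let $T(u)$ be the unique formal power series in $t$ (coefficients polynomial in $u$) with $T(u)=1+tuT(u)^2T$. For $j\ge -2$ set $$H_j(u)=(1-X^{j+1})\,X\,T(u)-(1+X)(1-X^{j+2}).$$ Then for every integer $j\ge -1$, $$T_j(u)=T(u)\,\frac{H_j(u)}{H_{j-1}(u)}\cdot\frac{1-X^{j+2}}{1-X^{j+3}}.$$
   Context: A ternary tree is either empty or consists of a root together with three ternary trees (left, middle and right subtrees). Given an integer $j$, embed a ternary tree by giving the root abscissa $j$ and, for a node of abscissa $i$, giving its left child abscissa $i+1$, its middle child abscissa $i$ and its right child abscissa $i-1$. A $j$-positive tree is a ternary tree all of whose nodes have abscissa $\ge 0$ in this embedding (for $j=-1$ only the empty tree). The core of a nonempty ternary tree is the largest subtree containing the root in which every node is reached from the root using only left and middle edges (the core of the empty tree is empty). $T_j(u)=\sum_{\tau} t^{|\tau|}u^{c(\tau)}$, summed over all $j$-positive trees $\tau$, where $|\tau|$ is the number of nodes and $c(\tau)$ the number of core nodes. *)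

theory Defs
  imports "HOL-Computational_Algebra.Polynomial" "HOL-Computational_Algebra.Formal_Power_Series"
          "HOL-Computational_Algebra.Fraction_Field"
begin

datatype ttree = Leaf | Node ttree ttree ttree

fun nodes :: "ttree \<Rightarrow> nat" where
  "nodes Leaf = 0"
| "nodes (Node l m r) = Suc (nodes l + nodes m + nodes r)"

fun core :: "ttree \<Rightarrow> nat" where
  "core Leaf = 0"
| "core (Node l m r) = Suc (core l + core m)"

text \<open>j-positivity: in the embedding with root abscissa j, every node has abscissa \<ge> 0.\<close>
fun jpos :: "int \<Rightarrow> ttree \<Rightarrow> bool" where
  "jpos j Leaf = True"
| "jpos j (Node l m r) = (0 \<le> j \<and> jpos (j + 1) l \<and> jpos j m \<and> jpos (j - 1) r)"

text \<open>Series in t with coefficients in Z[u].\<close>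
definition Tj :: "int \<Rightarrow> int poly fps" where
  "Tj j = Abs_fps (\<lambda>n. \<Sum>\<tau> \<in> {\<tau>. nodes \<tau> = n \<and> jpos j \<tau>}. monom 1 (core \<tau>))"

definition Tser :: "int poly fps" where
  "Tser = (THE T. T = 1 + fps_X * T ^ 3)"

definition Bser :: "int poly fps" where
  "Bser = fps_X * Tser ^ 2"

definition Xser :: "int poly fps" where
  "Xser = (THE X. X = Bser * (1 + X + X ^ 2))"

definition Tu :: "int poly fps" where
  "Tu = (THE S. S = 1 + fps_X * fps_const [:0, 1:] * S ^ 2 * Tser)"

text \<open>Computations with quotients and negative powers happen in the fraction field.\<close>
definition fr :: "int poly fps \<Rightarrow> int poly fps fract" where
  "fr a = Fract a 1"

definition Hj :: "int \<Rightarrow> int poly fps fract" where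
  "Hj j = (1 - fr Xser powi (j + 1)) * fr Xser * fr Tu - (1 + fr Xser) * (1 - fr Xser powi (j + 2))"

end

theory Submission
  imports Defs
begin

text \<open>
  Splitting a tree at its root gives T_j = 1 + t u T_{j+1} T_j W_{j-1} for j \<ge> 0, where
  W_j = T_j(1) counts j-positive trees and obeys W_j = 1 + t W_{j+1} W_j W_{j-1}. Together with
  T_{-1} = W_{-1} = 1 these recursions determine both families coefficient by coefficient, so it
  suffices to check that W_j = T (1 - X^{j+2}) (1 - X^{j+5}) / ((1 - X^{j+3}) (1 - X^{j+4})) and
  the claimed expression for T_j satisfy them. After clearing denominators these are polynomial
  identities modulo the relations t T^3 = T - 1, T (1 + X^2) = 1 + X + X^2 and
  t u T(u)^2 T = T(u) - 1.
\<close>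

unbundle fps_syntax

section \<open>Power series determined by contractive equations\<close>

definition fps_eq_upto :: "nat \<Rightarrow> 'a::semiring_1 fps \<Rightarrow> 'a fps \<Rightarrow> bool" where
  "fps_eq_upto n f g \<longleftrightarrow> (\<forall>k<n. f $ k = g $ k)"

lemma fps_eq_upto_refl [simp]: "fps_eq_upto n f f"
  by (simp add: fps_eq_upto_def)

lemma fps_eq_upto_0 [simp]: "fps_eq_upto 0 f g"
  by (simp add: fps_eq_upto_def)

lemma fps_eq_upto_add:
  "fps_eq_upto n f f' \<Longrightarrow> fps_eq_upto n g g' \<Longrightarrow> fps_eq_upto n (f + g) (f' + g')"
  by (simp add: fps_eq_upto_def)

lemma fps_eq_upto_mult:
  assumes "fps_eq_upto n f f'" "fps_eq_upto n g g'"
  shows "fps_eq_upto n (f * g) (f' * g')"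
  using assms unfolding fps_eq_upto_def fps_mult_nth by (auto intro!: sum.cong)

lemma fps_eq_upto_power: "fps_eq_upto n f f' \<Longrightarrow> fps_eq_upto n (f ^ m) (f' ^ m)"
  by (induction m) (simp_all add: fps_eq_upto_mult)

lemma fps_eq_upto_X_mult:
  "fps_eq_upto n f g \<Longrightarrow> fps_eq_upto (Suc n) (fps_X * f) (fps_X * g)"
  by (auto simp: fps_eq_upto_def less_Suc_eq_0_disj)

lemma fps_eq_upto_imp_eq: "(\<And>n. fps_eq_upto n f g) \<Longrightarrow> f = g"
  by (rule fps_ext) (auto simp: fps_eq_upto_def)

lemma fps_contraction_unique_fixpoint:
  fixes \<Phi> :: "'a::semiring_1 fps \<Rightarrow> 'a fps"
  assumes contr: "\<And>n f g. fps_eq_upto n f g \<Longrightarrow> fps_eq_upto (Suc n) (\<Phi> f) (\<Phi> g)"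
  shows "\<exists>!f. f = \<Phi> f"
proof -
  define s where "s k = (\<Phi> ^^ k) 0" for k
  have s_Suc: "s (Suc k) = \<Phi> (s k)" for k
    by (simp add: s_def)
  have s_stable: "fps_eq_upto k (s k) (s m)" if "k \<le> m" for k m
    using that
  proof (induction k arbitrary: m)
    case (Suc k)
    then obtain m' where "m = Suc m'" "k \<le> m'"
      by (cases m) auto
    then show ?case
      using Suc.IH contr by (simp add: s_Suc)
  qed simp
  define f where "f = Abs_fps (\<lambda>n. s (Suc n) $ n)"
  have f_approx: "fps_eq_upto n f (s n)" for n
    using s_stable by (auto simp: fps_eq_upto_def f_def)
  have f_fixed: "f = \<Phi> f"
  proof (rule fps_ext)
    fix n
    have "fps_eq_upto (Suc n) (\<Phi> f) (s (Suc n))"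
      using contr[OF f_approx] by (simp add: s_Suc)
    then show "f $ n = \<Phi> f $ n"
      by (simp add: fps_eq_upto_def f_def)
  qed
  have "g = f" if "g = \<Phi> g" for g
  proof (rule fps_eq_upto_imp_eq)
    fix n
    show "fps_eq_upto n g f"
      using that f_fixed contr by (induction n) (simp, metis)
  qed
  with f_fixed show ?thesis
    by blast
qed

lemma Tser_eq: "Tser = 1 + fps_X * Tser ^ 3"
proof -
  have "\<exists>!T :: int poly fps. T = 1 + fps_X * T ^ 3"
    by (rule fps_contraction_unique_fixpoint)
      (intro fps_eq_upto_add fps_eq_upto_refl fps_eq_upto_X_mult fps_eq_upto_power)
  then show ?thesis
    unfolding Tser_def by (rule theI')
qed

lemma Xser_eq: "Xser = fps_X * Tser ^ 2 * (1 + Xser + Xser ^ 2)"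
proof -
  have "\<exists>!X :: int poly fps. X = fps_X * (Tser ^ 2 * (1 + X + X ^ 2))"
    by (rule fps_contraction_unique_fixpoint)
      (intro fps_eq_upto_add fps_eq_upto_refl fps_eq_upto_X_mult fps_eq_upto_power fps_eq_upto_mult)
  then show ?thesis
    unfolding Xser_def Bser_def mult.assoc by (rule theI')
qed

lemma Tu_eq: "Tu = 1 + fps_X * fps_const [:0, 1:] * Tu ^ 2 * Tser"
proof -
  have "\<exists>!S :: int poly fps. S = 1 + fps_X * (fps_const [:0, 1:] * S ^ 2 * Tser)"
    by (rule fps_contraction_unique_fixpoint)
      (intro fps_eq_upto_add fps_eq_upto_refl fps_eq_upto_X_mult fps_eq_upto_power fps_eq_upto_mult)
  then show ?thesis
    unfolding Tu_def mult.assoc by (rule theI')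
qed

lemma Tser_nth_0 [simp]: "Tser $ 0 = 1"
  by (subst Tser_eq) simp

lemma Xser_nth_0 [simp]: "Xser $ 0 = 0"
  by (subst Xser_eq) simp

lemma Tu_nth_0 [simp]: "Tu $ 0 = 1"
  by (subst Tu_eq) simp

lemma Tser_cubic: "fps_X * Tser ^ 3 = Tser - 1"
  using Tser_eq by (simp add: algebra_simps)

lemma Tser_Xser: "Tser * (1 + Xser ^ 2) = 1 + Xser + Xser ^ 2"
proof -
  have "Xser * Tser = (fps_X * Tser ^ 3) * (1 + Xser + Xser ^ 2)"
    by (subst Xser_eq) algebra
  then show ?thesis
    unfolding Tser_cubic by algebra
qed

lemma Tu_quadratic: "fps_X * fps_const [:0, 1:] * Tu ^ 2 * Tser = Tu - 1"
  using Tu_eq by (simp add: algebra_simps)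

section \<open>Generating functions of tree classes\<close>

definition weighted_gf :: "('b \<Rightarrow> nat) \<Rightarrow> ('b \<Rightarrow> bool) \<Rightarrow> ('b \<Rightarrow> 'a::comm_semiring_1) \<Rightarrow> 'a fps" where
  "weighted_gf sz P w = Abs_fps (\<lambda>n. \<Sum>a \<in> {a. sz a = n \<and> P a}. w a)"

lemma weighted_gf_nth: "weighted_gf sz P w $ n = (\<Sum>a \<in> {a. sz a = n \<and> P a}. w a)"
  by (simp add: weighted_gf_def)

lemma finite_pairs_of_size:
  fixes sz1 :: "'a \<Rightarrow> nat" and sz2 :: "'b \<Rightarrow> nat"
  assumes "\<And>n. finite {a. sz1 a = n}" "\<And>n. finite {b. sz2 b = n}"
  shows "finite {ab. (\<lambda>(a, b). sz1 a + sz2 b) ab = n}"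
proof -
  have "{ab. (\<lambda>(a, b). sz1 a + sz2 b) ab = n} = (\<Union>i\<in>{0..n}. {a. sz1 a = i} \<times> {b. sz2 b = n - i})"
    by auto
  then show ?thesis
    using assms by simp
qed

lemma weighted_gf_mult:
  fixes sz1 :: "'b \<Rightarrow> nat" and sz2 :: "'c \<Rightarrow> nat" and w1 :: "'b \<Rightarrow> 'a::comm_semiring_1"
  assumes fin1: "\<And>n. finite {a. sz1 a = n}" and fin2: "\<And>n. finite {b. sz2 b = n}"
  shows "weighted_gf sz1 P w1 * weighted_gf sz2 Q w2 =
    weighted_gf (\<lambda>(a, b). sz1 a + sz2 b) (\<lambda>(a, b). P a \<and> Q b) (\<lambda>(a, b). w1 a * w2 b)"
proof (rule fps_ext)
  fix n
  let ?A = "\<lambda>i. {a. sz1 a = i \<and> P a}" and ?B = "\<lambda>i. {b. sz2 b = i \<and> Q b}"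
  have fin: "finite (?A i)" "finite (?B i)" for i
    using fin1 fin2 by (auto intro: rev_finite_subset)
  have pairs: "{ab. (\<lambda>(a, b). sz1 a + sz2 b) ab = n \<and> (\<lambda>(a, b). P a \<and> Q b) ab}
      = (\<Union>i\<in>{0..n}. ?A i \<times> ?B (n - i))"
    by auto
  have "(weighted_gf sz1 P w1 * weighted_gf sz2 Q w2) $ n
      = (\<Sum>i=0..n. \<Sum>ab \<in> ?A i \<times> ?B (n - i). (\<lambda>(a, b). w1 a * w2 b) ab)"
    by (simp add: weighted_gf_nth fps_mult_nth sum_product sum.cartesian_product)
  also have "\<dots> = (\<Sum>ab \<in> (\<Union>i\<in>{0..n}. ?A i \<times> ?B (n - i)). (\<lambda>(a, b). w1 a * w2 b) ab)"
    by (subst sum.UNION_disjoint) (auto simp: fin)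
  finally show "(weighted_gf sz1 P w1 * weighted_gf sz2 Q w2) $ n =
      weighted_gf (\<lambda>(a, b). sz1 a + sz2 b) (\<lambda>(a, b). P a \<and> Q b) (\<lambda>(a, b). w1 a * w2 b) $ n"
    unfolding weighted_gf_nth pairs .
qed

lemma finite_trees_of_size: "finite {\<tau>. nodes \<tau> = n}"
proof -
  have "finite {\<tau>. nodes \<tau> \<le> n}"
  proof (induction n)
    case 0
    have "{\<tau>. nodes \<tau> \<le> 0} = {Leaf}"
      by (auto elim: nodes.elims)
    then show ?case
      by simp
  next
    case (Suc n)
    let ?S = "{\<tau>. nodes \<tau> \<le> n}"
    have "{\<tau>. nodes \<tau> \<le> Suc n} \<subseteq> insert Leaf ((\<lambda>(l, m, r). Node l m r) ` (?S \<times> ?S \<times> ?S))"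
    proof
      fix \<tau> assume "\<tau> \<in> {\<tau>. nodes \<tau> \<le> Suc n}"
      then show "\<tau> \<in> insert Leaf ((\<lambda>(l, m, r). Node l m r) ` (?S \<times> ?S \<times> ?S))"
        by (cases \<tau>) force+
    qed
    then show ?case
      using Suc finite_subset by blast
  qed
  then show ?thesis
    by (rule rev_finite_subset) auto
qed

lemma weighted_gf_Node:
  fixes w w1 w2 w3 :: "ttree \<Rightarrow> 'a::comm_semiring_1"
  assumes P_Leaf: "P Leaf" and P_Node: "\<And>l m r. P (Node l m r) \<longleftrightarrow> P1 l \<and> P2 m \<and> P3 r"
    and w_Leaf: "w Leaf = 1" and w_Node: "\<And>l m r. w (Node l m r) = c * (w1 l * (w2 m * w3 r))"
  shows "weighted_gf nodes P w =
    1 + fps_X * (fps_const c * (weighted_gf nodes P1 w1 * (weighted_gf nodes P2 w2 * weighted_gf nodes P3 w3)))"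
proof (rule fps_ext)
  fix n
  let ?F = "\<lambda>(l, m, r). Node l m r"
  let ?sz = "\<lambda>(l, mr). nodes l + (\<lambda>(m, r). nodes m + nodes r) mr"
  let ?P = "\<lambda>(l, mr). P1 l \<and> (\<lambda>(m, r). P2 m \<and> P3 r) mr"
  let ?w = "\<lambda>(l, mr). w1 l * (\<lambda>(m, r). w2 m * w3 r) mr"
  have prod: "weighted_gf nodes P1 w1 * (weighted_gf nodes P2 w2 * weighted_gf nodes P3 w3) =
      weighted_gf ?sz ?P ?w"
    by (simp only: weighted_gf_mult finite_pairs_of_size finite_trees_of_size)
  show "weighted_gf nodes P w $ n = (1 + fps_X * (fps_const c *
      (weighted_gf nodes P1 w1 * (weighted_gf nodes P2 w2 * weighted_gf nodes P3 w3)))) $ n"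
  proof (cases n)
    case 0
    have "{\<tau>. nodes \<tau> = 0 \<and> P \<tau>} = {Leaf}"
      using P_Leaf by (auto elim: nodes.elims)
    then show ?thesis
      using 0 w_Leaf by (simp add: weighted_gf_nth)
  next
    case (Suc k)
    have trees: "{\<tau>. nodes \<tau> = Suc k \<and> P \<tau>} = ?F ` {x. ?sz x = k \<and> ?P x}"
      by (auto simp: P_Node elim!: nodes.elims intro: image_eqI[where x = "(_, _, _)"])
    have "inj_on ?F {x. ?sz x = k \<and> ?P x}"
      by (auto simp: inj_on_def)
    then have "weighted_gf nodes P w $ n = (\<Sum>x \<in> {x. ?sz x = k \<and> ?P x}. w (?F x))"
      by (simp add: weighted_gf_nth Suc trees sum.reindex)
    also have "\<dots> = c * (\<Sum>x \<in> {x. ?sz x = k \<and> ?P x}. ?w x)"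
      by (simp add: sum_distrib_left case_prod_unfold w_Node)
    finally show ?thesis
      using Suc by (simp add: prod weighted_gf_nth)
  qed
qed

definition Wj :: "int \<Rightarrow> int poly fps" where
  "Wj j = weighted_gf nodes (jpos j) (\<lambda>_. 1)"

lemma Tj_weighted_gf: "Tj j = weighted_gf nodes (jpos j) (\<lambda>\<tau>. monom 1 (core \<tau>))"
  by (simp add: Tj_def weighted_gf_def)

lemma weighted_gf_jpos_negative:
  assumes "j < 0" "w Leaf = 1"
  shows "weighted_gf nodes (jpos j) w = 1"
proof (rule fps_ext)
  fix n
  have "{\<tau>. nodes \<tau> = n \<and> jpos j \<tau>} = (if n = 0 then {Leaf} else {})"
    using \<open>j < 0\<close> by (auto elim: jpos.elims)
  then show "weighted_gf nodes (jpos j) w $ n = 1 $ n"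
    using \<open>w Leaf = 1\<close> by (simp add: weighted_gf_nth)
qed

lemma Tj_minus_one: "Tj (-1) = 1"
  unfolding Tj_weighted_gf by (rule weighted_gf_jpos_negative) auto

lemma Wj_minus_one: "Wj (-1) = 1"
  unfolding Wj_def by (rule weighted_gf_jpos_negative) auto

lemma Tj_rec: "j \<ge> 0 \<Longrightarrow> Tj j = 1 + fps_X * (fps_const [:0, 1:] * (Tj (j + 1) * (Tj j * Wj (j - 1))))"
  unfolding Tj_weighted_gf Wj_def
  by (rule weighted_gf_Node) (auto simp: monom_altdef power_add)

lemma Wj_rec: "j \<ge> 0 \<Longrightarrow> Wj j = 1 + fps_X * (fps_const 1 * (Wj (j + 1) * (Wj j * Wj (j - 1))))"
  unfolding Wj_def by (rule weighted_gf_Node) auto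

lemma fps_family_rec_unique:
  fixes P P' R R' :: "nat \<Rightarrow> 'a::comm_semiring_1 fps"
  assumes "P 0 = 1" "P' 0 = 1"
    and P_rec: "\<And>n. n \<ge> 1 \<Longrightarrow> P n = 1 + fps_X * (C * (P (Suc n) * (P n * R (n - 1))))"
    and P'_rec: "\<And>n. n \<ge> 1 \<Longrightarrow> P' n = 1 + fps_X * (C * (P' (Suc n) * (P' n * R' (n - 1))))"
    and R_R': "\<And>m n. (\<forall>n. fps_eq_upto m (P n) (P' n)) \<Longrightarrow> fps_eq_upto m (R n) (R' n)"
  shows "P n = P' n"
proof -
  have "\<forall>n. fps_eq_upto m (P n) (P' n)" for m
  proof (induction m)
    case (Suc m)
    show ?case
    proof
      fix n
      show "fps_eq_upto (Suc m) (P n) (P' n)"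
      proof (cases "n = 0")
        case False
        then have "n \<ge> 1"
          by simp
        moreover have "fps_eq_upto (Suc m) (1 + fps_X * (C * (P (Suc n) * (P n * R (n - 1)))))
            (1 + fps_X * (C * (P' (Suc n) * (P' n * R' (n - 1)))))"
          using Suc R_R'[OF Suc]
          by (intro fps_eq_upto_add fps_eq_upto_refl fps_eq_upto_X_mult fps_eq_upto_mult) auto
        ultimately show ?thesis
          using P_rec P'_rec by simp
      qed (simp add: assms)
    qed
  qed simp
  then show ?thesis
    by (intro fps_eq_upto_imp_eq) auto
qed

section \<open>The closed forms\<close>

text \<open>
  With y = X^(j+1), W_num/W_den is the closed form of W_j, T_num/T_den that of T_j, and
  H_poly U X (X^(j+2)) is H_j.
\<close>

definition W_den :: "'a::comm_ring_1 \<Rightarrow> 'a \<Rightarrow> 'a" where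
  "W_den X y = (1 - y * X ^ 3) * (1 - y * X ^ 2)"

definition W_num :: "'a::comm_ring_1 \<Rightarrow> 'a \<Rightarrow> 'a \<Rightarrow> 'a" where
  "W_num T X y = T * (1 - y * X ^ 4) * (1 - y * X)"

definition H_poly :: "'a::comm_ring_1 \<Rightarrow> 'a \<Rightarrow> 'a \<Rightarrow> 'a" where
  "H_poly U X y = (X - y) * U - (1 + X) * (1 - y)"

definition T_den :: "'a::comm_ring_1 \<Rightarrow> 'a \<Rightarrow> 'a \<Rightarrow> 'a" where
  "T_den U X y = H_poly U X y * (1 - y * X ^ 2)"

definition T_num :: "'a::comm_ring_1 \<Rightarrow> 'a \<Rightarrow> 'a \<Rightarrow> 'a" where
  "T_num U X y = U * H_poly U X (y * X) * (1 - y * X)"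

lemma W_closed_form_identity:
  fixes T t X y :: "'a::idom"
  assumes "t * T ^ 3 = T - 1" and "T * (1 + X ^ 2) = 1 + X + X ^ 2"
  shows "W_num T X (y * X) * W_den X (y * X ^ 2) * W_den X y =
    W_den X (y * X) * W_den X (y * X ^ 2) * W_den X y
      + t * W_num T X (y * X ^ 2) * W_num T X (y * X) * W_num T X y"
proof -
  have "W_num T X (y * X) * W_den X (y * X ^ 2) * W_den X y -
      (W_den X (y * X) * W_den X (y * X ^ 2) * W_den X y
        + t * W_num T X (y * X ^ 2) * W_num T X (y * X) * W_num T X y)
    = (X^18*y^5 - X^17*y^5 - X^16*y^5 - X^16*y^4 + X^15*y^5 + X^14*y^4 + X^13*y^3 + X^12*y^4
        - X^10*y^4 - X^10*y^3 - X^9*y^3 - X^9*y^2 + X^7*y^2 + X^6*y^3 + X^5*y^2 + X^4*y - X^3*y^2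
        - X^3*y - X^2*y + X*y) * (T * (1 + X ^ 2) - (1 + X + X ^ 2))
      - (t * T ^ 3 - (T - 1))
        * ((1 - y*X^6) * (1 - y*X^3) * (1 - y*X^5) * (1 - y*X^2) * (1 - y*X^4) * (1 - y*X))"
    unfolding W_den_def W_num_def by algebra
  then show ?thesis
    using assms by simp
qed

lemma T_closed_form_identity:
  fixes T U X y c :: "'a::idom"
  assumes "c * U ^ 2 * T = U - 1"
  shows "T_num U X (y * X) * T_den U X (y * X ^ 2) * W_den X y =
    T_den U X (y * X) * T_den U X (y * X ^ 2) * W_den X y
      + c * T_num U X (y * X ^ 2) * T_num U X (y * X) * W_num T X y"
proof -
  have "T_num U X (y * X) * T_den U X (y * X ^ 2) * W_den X y -
      (T_den U X (y * X) * T_den U X (y * X ^ 2) * W_den X y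
        + c * T_num U X (y * X ^ 2) * T_num U X (y * X) * W_num T X y)
    = - (c * U ^ 2 * T - (U - 1)) * (H_poly U X (y * X ^ 3) * (1 - y * X ^ 3)
        * H_poly U X (y * X ^ 2) * (1 - y * X ^ 2) * (1 - y * X ^ 4) * (1 - y * X))"
    unfolding W_den_def W_num_def T_den_def T_num_def H_poly_def by algebra
  then show ?thesis
    using assms by simp
qed

lemma rec_of_cross_multiplied:
  fixes a b c v v' v'' m m' m'' x :: "'a::idom"
  assumes "a * v = m" "b * v' = m'" "c * v'' = m''"
    and "m * b * c = a * b * c + x * m' * m * m''"
    and "a \<noteq> 0" "b \<noteq> 0" "c \<noteq> 0"
  shows "v = 1 + x * (v' * (v * v''))"
proof -
  have "a * b * c * (v - (1 + x * (v' * (v * v'')))) =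
      (a * v) * b * c - a * b * c - x * (b * v') * (a * v) * (c * v'')"
    by algebra
  also have "\<dots> = 0"
    using assms(1-4) by simp
  finally show ?thesis
    using assms(5-7) by simp
qed

lemma mult_fps_right_inverse_cancel:
  fixes f g :: "'a::comm_ring_1 fps"
  assumes "f $ 0 * y = 1"
  shows "f * (g * fps_right_inverse f y) = g"
  using fps_right_inverse[OF assms] by (metis mult.left_commute mult.right_neutral)

definition W_closed :: "nat \<Rightarrow> int poly fps" where
  "W_closed k = W_num Tser Xser (Xser ^ k) * fps_right_inverse (W_den Xser (Xser ^ k)) 1"

definition T_closed :: "nat \<Rightarrow> int poly fps" where
  "T_closed k = T_num Tu Xser (Xser ^ k) * fps_right_inverse (T_den Tu Xser (Xser ^ k)) (-1)"

lemma W_den_nth_0: "W_den Xser y $ 0 = 1"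
  by (simp add: W_den_def fps_power_zeroth)

lemma T_den_nth_0: "T_den Tu Xser y $ 0 = -1"
  by (simp add: T_den_def H_poly_def fps_power_zeroth algebra_simps)

lemma W_den_nonzero: "W_den Xser y \<noteq> 0"
  by (metis W_den_nth_0 fps_zero_nth zero_neq_one)

lemma T_den_nonzero: "T_den Tu Xser y \<noteq> 0"
  by (metis T_den_nth_0 fps_zero_nth neg_equal_0_iff_equal zero_neq_one)

lemma W_den_mult_W_closed: "W_den Xser (Xser ^ k) * W_closed k = W_num Tser Xser (Xser ^ k)"
  unfolding W_closed_def by (rule mult_fps_right_inverse_cancel) (simp add: W_den_nth_0)

lemma T_den_mult_T_closed: "T_den Tu Xser (Xser ^ k) * T_closed k = T_num Tu Xser (Xser ^ k)"
  unfolding T_closed_def by (rule mult_fps_right_inverse_cancel) (simp add: T_den_nth_0)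

lemma W_closed_rec:
  assumes "k \<ge> 1"
  shows "W_closed k = 1 + fps_X * (fps_const 1 * (W_closed (Suc k) * (W_closed k * W_closed (k - 1))))"
proof -
  obtain m where k: "k = Suc m"
    using assms by (cases k) auto
  have pow: "Xser ^ k = Xser ^ m * Xser" "Xser ^ Suc k = Xser ^ m * Xser ^ 2"
    by (simp_all add: k power_Suc2 power2_eq_square mult.assoc)
  have "W_closed k = 1 + fps_X * (W_closed (Suc k) * (W_closed k * W_closed m))"
  proof (rule rec_of_cross_multiplied[OF W_den_mult_W_closed W_den_mult_W_closed W_den_mult_W_closed
        _ W_den_nonzero W_den_nonzero W_den_nonzero])
    show "W_num Tser Xser (Xser ^ k) * W_den Xser (Xser ^ Suc k) * W_den Xser (Xser ^ m) =
        W_den Xser (Xser ^ k) * W_den Xser (Xser ^ Suc k) * W_den Xser (Xser ^ m) +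
        fps_X * W_num Tser Xser (Xser ^ Suc k) * W_num Tser Xser (Xser ^ k) * W_num Tser Xser (Xser ^ m)"
      unfolding pow by (rule W_closed_form_identity[OF Tser_cubic Tser_Xser])
  qed
  then show ?thesis
    using k by simp
qed

lemma T_closed_rec:
  assumes "k \<ge> 1"
  shows "T_closed k =
    1 + fps_X * (fps_const [:0, 1:] * (T_closed (Suc k) * (T_closed k * W_closed (k - 1))))"
proof -
  obtain m where k: "k = Suc m"
    using assms by (cases k) auto
  have pow: "Xser ^ k = Xser ^ m * Xser" "Xser ^ Suc k = Xser ^ m * Xser ^ 2"
    by (simp_all add: k power_Suc2 power2_eq_square mult.assoc)
  have "T_closed k = 1 + fps_X * fps_const [:0, 1:] * (T_closed (Suc k) * (T_closed k * W_closed m))"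
  proof (rule rec_of_cross_multiplied[OF T_den_mult_T_closed T_den_mult_T_closed W_den_mult_W_closed
        _ T_den_nonzero T_den_nonzero W_den_nonzero])
    show "T_num Tu Xser (Xser ^ k) * T_den Tu Xser (Xser ^ Suc k) * W_den Xser (Xser ^ m) =
        T_den Tu Xser (Xser ^ k) * T_den Tu Xser (Xser ^ Suc k) * W_den Xser (Xser ^ m) +
        fps_X * fps_const [:0, 1:] * T_num Tu Xser (Xser ^ Suc k) * T_num Tu Xser (Xser ^ k) *
          W_num Tser Xser (Xser ^ m)"
      unfolding pow by (rule T_closed_form_identity[OF Tu_quadratic])
  qed
  then show ?thesis
    using k by (simp add: mult.assoc)
qed

lemma W_closed_0: "W_closed 0 = 1"
proof -
  have "W_num Tser Xser 1 = W_den Xser 1"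
    unfolding W_num_def W_den_def using Tser_Xser by algebra
  then have "W_den Xser (Xser ^ 0) * W_closed 0 = W_den Xser (Xser ^ 0) * 1"
    using W_den_mult_W_closed[of 0] by simp
  then show ?thesis
    using W_den_nonzero by simp
qed

lemma T_closed_0: "T_closed 0 = 1"
proof -
  have "T_num Tu Xser 1 = T_den Tu Xser 1"
    unfolding T_num_def T_den_def H_poly_def by algebra
  then have "T_den Tu Xser (Xser ^ 0) * T_closed 0 = T_den Tu Xser (Xser ^ 0) * 1"
    using T_den_mult_T_closed[of 0] by simp
  then show ?thesis
    using T_den_nonzero by simp
qed

lemma Wj_eq_W_closed: "Wj (int k - 1) = W_closed k"
proof (rule fps_family_rec_unique[where P = "\<lambda>k. Wj (int k - 1)" and R = "\<lambda>k. Wj (int k - 1)"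
      and R' = W_closed])
  fix n :: nat
  assume "n \<ge> 1"
  then have "int (Suc n) - 1 = int n - 1 + 1" "int (n - 1) - 1 = int n - 1 - 1"
    by simp_all
  then show "Wj (int n - 1) =
      1 + fps_X * (fps_const 1 * (Wj (int (Suc n) - 1) * (Wj (int n - 1) * Wj (int (n - 1) - 1))))"
    using Wj_rec[of "int n - 1"] \<open>n \<ge> 1\<close> by simp
qed (use Wj_minus_one W_closed_0 W_closed_rec in auto)

lemma Tj_eq_T_closed: "Tj (int k - 1) = T_closed k"
proof (rule fps_family_rec_unique[where P = "\<lambda>k. Tj (int k - 1)" and R = "\<lambda>k. Wj (int k - 1)"
      and R' = W_closed])
  fix n :: nat
  assume "n \<ge> 1"
  then have "int (Suc n) - 1 = int n - 1 + 1" "int (n - 1) - 1 = int n - 1 - 1"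
    by simp_all
  then show "Tj (int n - 1) = 1 + fps_X * (fps_const [:0, 1:] *
      (Tj (int (Suc n) - 1) * (Tj (int n - 1) * Wj (int (n - 1) - 1))))"
    using Tj_rec[of "int n - 1"] \<open>n \<ge> 1\<close> by simp
qed (use Tj_minus_one T_closed_0 T_closed_rec Wj_eq_W_closed in simp_all)

section \<open>Passing to the fraction field\<close>

lemma fr_add [simp]: "fr (a + b) = fr a + fr b"
  by (simp add: fr_def)

lemma fr_diff [simp]: "fr (a - b) = fr a - fr b"
  by (simp add: fr_def)

lemma fr_mult [simp]: "fr (a * b) = fr a * fr b"
  by (simp add: fr_def)

lemma fr_1 [simp]: "fr 1 = 1"
  by (simp add: fr_def fract_collapse)

lemma fr_power [simp]: "fr (a ^ n) = fr a ^ n"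
  by (induction n) simp_all

lemma fr_eq_0_iff [simp]: "fr a = 0 \<longleftrightarrow> a = 0"
  by (simp add: fr_def Zero_fract_def eq_fract)

lemma Xser_nonzero: "Xser \<noteq> 0"
proof
  assume "Xser = 0"
  moreover have "Xser $ 1 = 1"
    by (subst Xser_eq) (simp add: fps_power_zeroth)
  ultimately show False
    by simp
qed

lemma Hj_eq_H_poly: "Hj (int k - 2) = fr (H_poly Tu Xser (Xser ^ k))"
proof -
  have "fr Xser powi (int k - 1) * fr Xser = fr Xser powi (int k - 1 + 1)"
    using power_int_add[of "fr Xser" "int k - 1" 1] Xser_nonzero by simp
  also have "\<dots> = fr Xser ^ k"
    by simp
  finally have "fr Xser powi (int k - 1) * fr Xser = fr Xser ^ k" .
  then show ?thesis
    unfolding Hj_def H_poly_def by (simp add: algebra_simps)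
qed

lemma fr_T_closed: "fr (T_closed k) = fr (T_num Tu Xser (Xser ^ k)) / fr (T_den Tu Xser (Xser ^ k))"
  using arg_cong[OF T_den_mult_T_closed[of k], of fr] T_den_nonzero
  by (simp add: eq_divide_eq mult.commute)

theorem theorem10:
  fixes j :: int
  assumes "j \<ge> -1"
  shows "fr (Tj j) = fr Tu * (Hj j / Hj (j - 1)) * ((1 - fr Xser powi (j + 2)) / (1 - fr Xser powi (j + 3)))"
proof -
  define k where "k = nat (j + 1)"
  have j: "j = int k - 1"
    using assms by (simp add: k_def)
  have H: "Hj j = fr (H_poly Tu Xser (Xser ^ Suc k))" "Hj (j - 1) = fr (H_poly Tu Xser (Xser ^ k))"
    using Hj_eq_H_poly[of "Suc k"] Hj_eq_H_poly[of k] by (simp_all add: j algebra_simps)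
  have powers: "fr Xser powi (j + 2) = fr Xser ^ Suc k" "fr Xser powi (j + 3) = fr Xser ^ Suc (Suc k)"
    by (simp_all add: j add.commute power_int_of_nat[symmetric])
  have "fr (Tj j) = fr (T_num Tu Xser (Xser ^ k)) / fr (T_den Tu Xser (Xser ^ k))"
    using Tj_eq_T_closed fr_T_closed j by simp
  also have "\<dots> = fr Tu * (Hj j / Hj (j - 1)) * ((1 - fr Xser ^ Suc k) / (1 - fr Xser ^ Suc (Suc k)))"
    unfolding T_num_def T_den_def H by (simp add: times_divide_times_eq power2_eq_square mult_ac)
  finally show ?thesis
    unfolding powers .
qed

end
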